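(* Let $K$ be a field and $A$ a subring of $K$. Then the surjective map $\gamma:\mathrm{Zar}(K|A)\to\mathrm{Spec}(A)$, $V\mapsto M_V\cap A$, is continuous and closed when both $\mathrm{Zar}(K|A)$ and $\mathrm{Spec}(A)$ are endowed with their ultrafilter topologies.
   Context: $\mathrm{Zar}(K|A)$ denotes the set of all valuation rings of $K$ containing $A$; $M_V$ denotes the maximal ideal of $V$, and $M_V\cap A$ is the center of $V$ on $A$. A filter on a set $X$ is a nonempty collection of subsets of $X$ not containing $\emptyset$, closed under finite intersections and supersets; an ultrafilter is a maximal filter. Ultrafilter topology on $Z:=\mathrm{Zar}(K|A)$: for $x\in K$ let $B_x:=\{V\in Z\mid x\in V\}$; for $Y\subseteq Z$ nonempty and an ultrafilter $\mathscr U$ on $Y$ let $A_{\mathscr U,Y}:=\{x\in K\mid B_x\cap Y\in\mathscr U\}$ (a valuation domain in $Z$); the closed sets are the subsets $Y$ with $A_{\mathscr U,Y}\in Y$ for every ultrafilter $\mathscr U$ on $Y$. Ultrafilter topology on $X:=\mathrm{Spec}(A)$: for $a\in A$ let $V(a):=\{P\in X\mid a\in P\}$; for $C\subseteq X$ and an ultrafilter $\mathscr U$ on $C$, $P_{\mathscr U}:=\{a\in A\mid V(a)\cap C\in\mathscr U\}$ is a prime ideal of $A$ (an ultrafilter limit point of $C$); the closed sets are the subsets $C$ containing all their ultrafilter limit points. *)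

theory Defs
  imports Main
begin

text \<open>All rings are subrings of a fixed field, represented as subsets of a type 'k of class field.\<close>

definition is_subring :: "'k::field set \<Rightarrow> bool" where
  "is_subring R \<longleftrightarrow> 0 \<in> R \<and> 1 \<in> R \<and>
     (\<forall>x\<in>R. \<forall>y\<in>R. x + y \<in> R \<and> - x \<in> R \<and> x * y \<in> R)"

definition valuation_ring :: "'k::field set \<Rightarrow> bool" where
  "valuation_ring V \<longleftrightarrow> is_subring V \<and> (\<forall>x. x \<noteq> 0 \<longrightarrow> x \<in> V \<or> inverse x \<in> V)"

definition Zar :: "'k::field set \<Rightarrow> 'k set set" where
  "Zar A = {V. valuation_ring V \<and> A \<subseteq> V}"

definition max_ideal :: "'k::field set \<Rightarrow> 'k set" where
  "max_ideal V = {x \<in> V. \<not> (x \<noteq> 0 \<and> inverse x \<in> V)}"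

definition prime_ideal_of :: "'k::field set \<Rightarrow> 'k set \<Rightarrow> bool" where
  "prime_ideal_of A P \<longleftrightarrow> P \<subseteq> A \<and> 0 \<in> P \<and>
     (\<forall>x\<in>P. \<forall>y\<in>P. x + y \<in> P) \<and>
     (\<forall>a\<in>A. \<forall>x\<in>P. a * x \<in> P) \<and>
     P \<noteq> A \<and>
     (\<forall>a\<in>A. \<forall>b\<in>A. a * b \<in> P \<longrightarrow> a \<in> P \<or> b \<in> P)"

definition Spec :: "'k::field set \<Rightarrow> 'k set set" where
  "Spec A = {P. prime_ideal_of A P}"

definition center :: "'k::field set \<Rightarrow> 'k set \<Rightarrow> 'k set" where
  "center A V = max_ideal V \<inter> A"

definition filter_on :: "'a set \<Rightarrow> 'a set set \<Rightarrow> bool" where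
  "filter_on X F \<longleftrightarrow> F \<noteq> {} \<and> F \<subseteq> Pow X \<and> {} \<notin> F \<and>
     (\<forall>a\<in>F. \<forall>b\<in>F. a \<inter> b \<in> F) \<and>
     (\<forall>a b. a \<in> F \<and> a \<subseteq> b \<and> b \<subseteq> X \<longrightarrow> b \<in> F)"

definition ultrafilter_on :: "'a set \<Rightarrow> 'a set set \<Rightarrow> bool" where
  "ultrafilter_on X U \<longleftrightarrow> filter_on X U \<and> (\<forall>G. filter_on X G \<and> U \<subseteq> G \<longrightarrow> G = U)"

text \<open>Ultrafilter topology on Zar(K|A), via its closed sets.\<close>
definition zar_limit :: "'k::field set set \<Rightarrow> 'k set set set \<Rightarrow> 'k set" where
  "zar_limit Y U = {x. {V \<in> Y. x \<in> V} \<in> U}"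

definition zar_uf_closed :: "'k::field set \<Rightarrow> 'k set set \<Rightarrow> bool" where
  "zar_uf_closed A Y \<longleftrightarrow> Y \<subseteq> Zar A \<and>
     (\<forall>U. ultrafilter_on Y U \<longrightarrow> zar_limit Y U \<in> Y)"

definition spec_limit :: "'k::field set \<Rightarrow> 'k set set \<Rightarrow> 'k set set set \<Rightarrow> 'k set" where
  "spec_limit A C U = {a \<in> A. {P \<in> C. a \<in> P} \<in> U}"

definition spec_uf_closed :: "'k::field set \<Rightarrow> 'k set set \<Rightarrow> bool" where
  "spec_uf_closed A C \<longleftrightarrow> C \<subseteq> Spec A \<and>
     (\<forall>U. ultrafilter_on C U \<longrightarrow> spec_limit A C U \<in> C)"

end

theory Submission
  imports Defs
begin

text \<open>
  The limit \<open>A\<^sub>U\<close> of an ultrafilter \<open>U\<close> on a set \<open>Y\<close> of valuation rings is the set of \<open>x\<close>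
  with \<open>{V \<in> Y. x \<in> V} \<in> U\<close>. Being a non-unit of \<open>V\<close> is a Boolean combination of such
  memberships, and ultrafilters commute with Boolean operations, so the center of \<open>A\<^sub>U\<close> is the
  limit in \<open>Spec A\<close> of the pushforward of \<open>U\<close> along \<open>\<gamma>\<close>: the center map sends ultrafilter limits
  to ultrafilter limits. Continuity follows because pushforwards of ultrafilters are ultrafilters;
  closedness because every ultrafilter on \<open>\<gamma>(Y)\<close> is the pushforward of an ultrafilter on \<open>Y\<close>.
\<close>

lemma filter_on_top: "filter_on X F \<Longrightarrow> X \<in> F"
  unfolding filter_on_def by blast

lemma filter_on_subset: "filter_on X F \<Longrightarrow> S \<in> F \<Longrightarrow> S \<subseteq> X"
  unfolding filter_on_def by blast

lemma filter_on_empty: "filter_on X F \<Longrightarrow> {} \<notin> F"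
  unfolding filter_on_def by blast

lemma filter_on_mono: "filter_on X F \<Longrightarrow> S \<in> F \<Longrightarrow> S \<subseteq> T \<Longrightarrow> T \<subseteq> X \<Longrightarrow> T \<in> F"
  unfolding filter_on_def by blast

lemma filter_on_Int: "filter_on X F \<Longrightarrow> S \<in> F \<Longrightarrow> T \<in> F \<Longrightarrow> S \<inter> T \<in> F"
  unfolding filter_on_def by blast

lemma filter_on_Int_iff:
  "filter_on X F \<Longrightarrow> S \<subseteq> X \<Longrightarrow> T \<subseteq> X \<Longrightarrow> S \<inter> T \<in> F \<longleftrightarrow> S \<in> F \<and> T \<in> F"
  unfolding filter_on_def by (meson inf_le1 inf_le2)

lemma filter_onI:
  assumes "X \<in> F" "F \<subseteq> Pow X" "{} \<notin> F" "\<And>S T. S \<in> F \<Longrightarrow> T \<in> F \<Longrightarrow> S \<inter> T \<in> F"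
    "\<And>S T. S \<in> F \<Longrightarrow> S \<subseteq> T \<Longrightarrow> T \<subseteq> X \<Longrightarrow> T \<in> F"
  shows "filter_on X F"
  unfolding filter_on_def using assms by blast

lemma filter_on_generated:
  assumes F: "filter_on Y U" and sub: "\<And>u. u \<in> U \<Longrightarrow> g u \<subseteq> X"
    and nonempty: "\<And>u. u \<in> U \<Longrightarrow> g u \<noteq> {}"
    and Int: "\<And>u v. u \<in> U \<Longrightarrow> v \<in> U \<Longrightarrow> g (u \<inter> v) = g u \<inter> g v"
  shows "filter_on X {T. T \<subseteq> X \<and> (\<exists>u\<in>U. g u \<subseteq> T)}"
proof (rule filter_onI)
  show "X \<in> {T. T \<subseteq> X \<and> (\<exists>u\<in>U. g u \<subseteq> T)}" using filter_on_top[OF F] sub by blast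
  show "{} \<notin> {T. T \<subseteq> X \<and> (\<exists>u\<in>U. g u \<subseteq> T)}" using nonempty by blast
next
  fix T T' assume "T \<in> {T. T \<subseteq> X \<and> (\<exists>u\<in>U. g u \<subseteq> T)}" "T' \<in> {T. T \<subseteq> X \<and> (\<exists>u\<in>U. g u \<subseteq> T)}"
  then obtain u u' where u: "u \<in> U" "u' \<in> U" "g u \<subseteq> T" "g u' \<subseteq> T'" "T \<subseteq> X" "T' \<subseteq> X"
    by blast
  moreover have "u \<inter> u' \<in> U" using filter_on_Int[OF F u(1,2)] .
  moreover have "g (u \<inter> u') \<subseteq> T \<inter> T'" using Int[OF u(1,2)] u(3,4) by blast
  ultimately show "T \<inter> T' \<in> {T. T \<subseteq> X \<and> (\<exists>u\<in>U. g u \<subseteq> T)}" by blast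
qed blast+

lemma ultrafilter_on_filter_on: "ultrafilter_on X U \<Longrightarrow> filter_on X U"
  unfolding ultrafilter_on_def by blast

lemma ultrafilter_on_maximal: "ultrafilter_on X U \<Longrightarrow> filter_on X G \<Longrightarrow> U \<subseteq> G \<Longrightarrow> G = U"
  unfolding ultrafilter_on_def by blast

lemma ultrafilter_on_cases:
  assumes U: "ultrafilter_on X U" and S: "S \<subseteq> X"
  shows "S \<in> U \<or> X - S \<in> U"
proof (rule ccontr)
  assume neither: "\<not> (S \<in> U \<or> X - S \<in> U)"
  have F: "filter_on X U" using U by (rule ultrafilter_on_filter_on)
  have "u \<inter> (X - S) \<noteq> {}" if "u \<in> U" for u
  proof
    assume "u \<inter> (X - S) = {}"
    hence "u \<subseteq> S" using filter_on_subset[OF F that] by blast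
    hence "S \<in> U" using filter_on_mono[OF F that _ S] by blast
    thus False using neither by simp
  qed
  \<comment> \<open>so adjoining \<open>X - S\<close> to \<open>U\<close> yields a proper filter, contradicting maximality\<close>
  hence "filter_on X {T. T \<subseteq> X \<and> (\<exists>u\<in>U. u \<inter> (X - S) \<subseteq> T)}"
    by (intro filter_on_generated[OF F]) blast+
  moreover have "U \<subseteq> {T. T \<subseteq> X \<and> (\<exists>u\<in>U. u \<inter> (X - S) \<subseteq> T)}"
    using filter_on_subset[OF F] by blast
  ultimately have "{T. T \<subseteq> X \<and> (\<exists>u\<in>U. u \<inter> (X - S) \<subseteq> T)} = U"
    by (rule ultrafilter_on_maximal[OF U])
  moreover have "X - S \<in> {T. T \<subseteq> X \<and> (\<exists>u\<in>U. u \<inter> (X - S) \<subseteq> T)}"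
    using filter_on_top[OF F] by auto
  ultimately show False using neither by simp
qed

lemma ultrafilter_on_Diff_iff:
  assumes U: "ultrafilter_on X U" and S: "S \<subseteq> X"
  shows "X - S \<in> U \<longleftrightarrow> S \<notin> U"
proof -
  have F: "filter_on X U" using U by (rule ultrafilter_on_filter_on)
  have "S \<inter> (X - S) \<notin> U" using filter_on_empty[OF F] by (simp add: Diff_disjoint)
  hence "\<not> (S \<in> U \<and> X - S \<in> U)" using filter_on_Int[OF F] by blast
  thus ?thesis using ultrafilter_on_cases[OF U S] by auto
qed

lemma ultrafilter_onI:
  assumes F: "filter_on X U" and cases: "\<And>S. S \<subseteq> X \<Longrightarrow> S \<in> U \<or> X - S \<in> U"
  shows "ultrafilter_on X U"
  unfolding ultrafilter_on_def
proof (intro conjI allI impI F)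
  fix G assume "filter_on X G \<and> U \<subseteq> G"
  hence G: "filter_on X G" and UG: "U \<subseteq> G" by auto
  have "T \<in> U" if "T \<in> G" for T
  proof (rule ccontr)
    assume "T \<notin> U"
    hence "X - T \<in> G" using cases[OF filter_on_subset[OF G that]] UG by blast
    hence "T \<inter> (X - T) \<in> G" using filter_on_Int[OF G that] by blast
    thus False using filter_on_empty[OF G] by (simp add: Diff_disjoint)
  qed
  thus "G = U" using UG by blast
qed

lemma filter_on_Union_chain:
  assumes "\<C> \<noteq> {}" and filters: "\<And>G. G \<in> \<C> \<Longrightarrow> filter_on X G"
    and chain: "\<And>G G'. G \<in> \<C> \<Longrightarrow> G' \<in> \<C> \<Longrightarrow> G \<subseteq> G' \<or> G' \<subseteq> G"
  shows "filter_on X (\<Union>\<C>)"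
proof (rule filter_onI)
  show "X \<in> \<Union>\<C>" using assms(1) filter_on_top[OF filters] by blast
  show "\<Union>\<C> \<subseteq> Pow X" using filter_on_subset[OF filters] by blast
  show "{} \<notin> \<Union>\<C>" using filter_on_empty[OF filters] by blast
next
  fix S T assume "S \<in> \<Union>\<C>" "T \<in> \<Union>\<C>"
  then obtain G G' where G: "G \<in> \<C>" "G' \<in> \<C>" "S \<in> G" "T \<in> G'" by blast
  have "S \<inter> T \<in> H" if "H \<in> \<C>" "S \<in> H" "T \<in> H" for H
    using filter_on_Int[OF filters[OF that(1)] that(2,3)] .
  thus "S \<inter> T \<in> \<Union>\<C>" using chain[OF G(1,2)] G by blast
next
  fix S T assume "S \<in> \<Union>\<C>" "S \<subseteq> T" "T \<subseteq> X"
  thus "T \<in> \<Union>\<C>" using filter_on_mono[OF filters] by blast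
qed

lemma filter_on_extends_to_ultrafilter:
  assumes "filter_on X F"
  obtains U where "ultrafilter_on X U" "F \<subseteq> U"
proof -
  let ?\<A> = "{G. filter_on X G \<and> F \<subseteq> G}"
  have "\<exists>M\<in>?\<A>. \<forall>G\<in>?\<A>. M \<subseteq> G \<longrightarrow> G = M"
  proof (rule subset_Zorn_nonempty)
    show "?\<A> \<noteq> {}" using assms by blast
  next
    fix \<C> assume "\<C> \<noteq> {}" "subset.chain ?\<A> \<C>"
    thus "\<Union>\<C> \<in> ?\<A>"
      using filter_on_Union_chain[of \<C> X] by (auto simp: subset_chain_def)
  qed
  then obtain M where "M \<in> ?\<A>" "\<forall>G\<in>?\<A>. M \<subseteq> G \<longrightarrow> G = M" by blast
  hence "ultrafilter_on X M" "F \<subseteq> M" unfolding ultrafilter_on_def by auto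
  thus thesis by (rule that)
qed

definition pushforward :: "('a \<Rightarrow> 'b) \<Rightarrow> 'a set \<Rightarrow> 'b set \<Rightarrow> 'a set set \<Rightarrow> 'b set set" where
  "pushforward f X Y U = {S. S \<subseteq> Y \<and> {x \<in> X. f x \<in> S} \<in> U}"

lemma ultrafilter_on_pushforward:
  assumes f: "f ` X \<subseteq> Y" and U: "ultrafilter_on X U"
  shows "ultrafilter_on Y (pushforward f X Y U)"
proof -
  have F: "filter_on X U" using U by (rule ultrafilter_on_filter_on)
  let ?pre = "\<lambda>S. {x \<in> X. f x \<in> S}"
  have mem: "S \<in> pushforward f X Y U \<longleftrightarrow> S \<subseteq> Y \<and> ?pre S \<in> U" for S
    unfolding pushforward_def by simp
  have "filter_on Y (pushforward f X Y U)"
  proof (rule filter_onI)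
    have "?pre Y = X" using f by blast
    thus "Y \<in> pushforward f X Y U" using filter_on_top[OF F] mem by simp
    show "pushforward f X Y U \<subseteq> Pow Y" using mem by blast
    show "{} \<notin> pushforward f X Y U" using filter_on_empty[OF F] mem by simp
  next
    fix S T assume "S \<in> pushforward f X Y U" "T \<in> pushforward f X Y U"
    moreover have "?pre (S \<inter> T) = ?pre S \<inter> ?pre T" by blast
    ultimately show "S \<inter> T \<in> pushforward f X Y U"
      using filter_on_Int[OF F, of "?pre S" "?pre T"] mem by auto
  next
    fix S T assume "S \<in> pushforward f X Y U" "S \<subseteq> T" "T \<subseteq> Y"
    moreover have "?pre S \<subseteq> ?pre T" using \<open>S \<subseteq> T\<close> by blast
    ultimately show "T \<in> pushforward f X Y U"
      using filter_on_mono[OF F, of "?pre S" "?pre T"] mem by auto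
  qed
  moreover have "?pre (Y - S) = X - ?pre S" for S using f by blast
  ultimately show ?thesis
    using ultrafilter_on_cases[OF U, of "?pre S" for S] mem by (intro ultrafilter_onI) auto
qed

lemma ultrafilter_on_lift:
  assumes f: "f ` X = Y" and U: "ultrafilter_on Y U"
  obtains U' where "ultrafilter_on X U'" "pushforward f X Y U' = U"
proof -
  have F: "filter_on Y U" using U by (rule ultrafilter_on_filter_on)
  let ?pre = "\<lambda>S. {x \<in> X. f x \<in> S}"
  have "?pre S \<noteq> {}" if S: "S \<in> U" for S
  proof -
    have "S \<noteq> {}" using filter_on_empty[OF F] S by auto
    then obtain y where "y \<in> S" by blast
    moreover have "y \<in> f ` X" using filter_on_subset[OF F S] \<open>y \<in> S\<close> f by blast
    ultimately show ?thesis by blast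
  qed
  hence "filter_on X {T. T \<subseteq> X \<and> (\<exists>S\<in>U. ?pre S \<subseteq> T)}"
    by (intro filter_on_generated[OF F]) blast+
  then obtain U' where U': "ultrafilter_on X U'" "{T. T \<subseteq> X \<and> (\<exists>S\<in>U. ?pre S \<subseteq> T)} \<subseteq> U'"
    by (rule filter_on_extends_to_ultrafilter)
  have "?pre S \<in> U'" if "S \<in> U" for S
  proof -
    have "?pre S \<in> {T. T \<subseteq> X \<and> (\<exists>S\<in>U. ?pre S \<subseteq> T)}" using that by blast
    thus ?thesis using U'(2) by blast
  qed
  hence "U \<subseteq> pushforward f X Y U'"
    using filter_on_subset[OF F] unfolding pushforward_def by auto
  moreover have "filter_on Y (pushforward f X Y U')"
    using ultrafilter_on_pushforward[OF _ U'(1), of f Y] f by (simp add: ultrafilter_on_filter_on)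
  ultimately have "pushforward f X Y U' = U" by (rule ultrafilter_on_maximal[OF U, rotated])
  with U'(1) show thesis by (rule that)
qed

lemma mem_zar_limit_iff: "x \<in> zar_limit Y U \<longleftrightarrow> {V \<in> Y. x \<in> V} \<in> U"
  unfolding zar_limit_def by simp

lemma subset_zar_limit:
  assumes F: "filter_on Y U" and sub: "\<And>V. V \<in> Y \<Longrightarrow> A \<subseteq> V"
  shows "A \<subseteq> zar_limit Y U"
proof
  fix a assume "a \<in> A"
  hence "{V \<in> Y. a \<in> V} = Y" using sub by blast
  thus "a \<in> zar_limit Y U" using filter_on_top[OF F] by (simp add: mem_zar_limit_iff)
qed

lemma zar_limit_closed:
  assumes F: "filter_on Y U" and x: "x \<in> zar_limit Y U" and y: "y \<in> zar_limit Y U"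
    and z: "\<And>V. V \<in> Y \<Longrightarrow> x \<in> V \<Longrightarrow> y \<in> V \<Longrightarrow> z \<in> V"
  shows "z \<in> zar_limit Y U"
proof -
  have "{V \<in> Y. x \<in> V} \<inter> {V \<in> Y. y \<in> V} \<in> U"
    using filter_on_Int[OF F] x y by (simp add: mem_zar_limit_iff)
  moreover have "{V \<in> Y. x \<in> V} \<inter> {V \<in> Y. y \<in> V} \<subseteq> {V \<in> Y. z \<in> V}" using z by blast
  ultimately have "{V \<in> Y. z \<in> V} \<in> U" using filter_on_mono[OF F] by blast
  thus ?thesis by (simp add: mem_zar_limit_iff)
qed

lemma valuation_ring_zar_limit:
  assumes U: "ultrafilter_on Y U" and val: "\<And>V. V \<in> Y \<Longrightarrow> valuation_ring V"
  shows "valuation_ring (zar_limit Y U)"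
proof -
  let ?W = "zar_limit Y U"
  have F: "filter_on Y U" using U by (rule ultrafilter_on_filter_on)
  have ring: "is_subring V" if "V \<in> Y" for V using val[OF that] by (simp add: valuation_ring_def)
  have "{0, 1} \<subseteq> ?W" using ring by (intro subset_zar_limit[OF F]) (simp add: is_subring_def)
  moreover have "x + y \<in> ?W" "- x \<in> ?W" "x * y \<in> ?W" if "x \<in> ?W" "y \<in> ?W" for x y
    using zar_limit_closed[OF F that] zar_limit_closed[OF F that(1) that(1)] ring
    by (simp_all add: is_subring_def)
  ultimately have "is_subring ?W" unfolding is_subring_def by (intro conjI ballI) auto
  moreover have "inverse x \<in> ?W" if "x \<noteq> 0" "x \<notin> ?W" for x
  proof -
    have "Y - {V \<in> Y. x \<in> V} \<in> U"
      using ultrafilter_on_Diff_iff[OF U, of "{V \<in> Y. x \<in> V}"] that(2) by (simp add: mem_zar_limit_iff)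
    moreover have "Y - {V \<in> Y. x \<in> V} \<subseteq> {V \<in> Y. inverse x \<in> V}"
      using val that(1) unfolding valuation_ring_def by blast
    ultimately show ?thesis using filter_on_mono[OF F] by (simp add: mem_zar_limit_iff)
  qed
  ultimately show ?thesis unfolding valuation_ring_def by blast
qed

lemma mem_max_ideal_iff: "x \<in> max_ideal V \<longleftrightarrow> x \<in> V \<and> (x = 0 \<or> inverse x \<notin> V)"
  unfolding max_ideal_def by auto

text \<open>Being a non-unit is a Boolean combination of memberships, which ultrafilters respect.\<close>

lemma max_ideal_zar_limit:
  assumes U: "ultrafilter_on Y U"
  shows "x \<in> max_ideal (zar_limit Y U) \<longleftrightarrow> {V \<in> Y. x \<in> max_ideal V} \<in> U"
proof (cases "x = 0")
  case True
  thus ?thesis by (simp add: mem_max_ideal_iff mem_zar_limit_iff)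
next
  case False
  have F: "filter_on Y U" using U by (rule ultrafilter_on_filter_on)
  have "{V \<in> Y. x \<in> max_ideal V} = {V \<in> Y. x \<in> V} \<inter> (Y - {V \<in> Y. inverse x \<in> V})"
    using False by (auto simp: mem_max_ideal_iff)
  thus ?thesis
    using False filter_on_Int_iff[OF F, of "{V \<in> Y. x \<in> V}" "Y - {V \<in> Y. inverse x \<in> V}"]
      ultrafilter_on_Diff_iff[OF U, of "{V \<in> Y. inverse x \<in> V}"]
    by (simp add: mem_max_ideal_iff mem_zar_limit_iff)
qed

lemma zar_limit_in_Zar:
  assumes "Y \<subseteq> Zar A" and U: "ultrafilter_on Y U"
  shows "zar_limit Y U \<in> Zar A"
  using assms valuation_ring_zar_limit[OF U] subset_zar_limit[OF ultrafilter_on_filter_on[OF U]]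
  unfolding Zar_def by blast

lemma max_ideal_add_closed_if_quotient:
  assumes V: "valuation_ring V" and x: "x \<in> max_ideal V" and y: "y \<in> max_ideal V"
    and q: "x / y \<in> V"
  shows "x + y \<in> max_ideal V"
proof (cases "y = 0")
  case True
  thus ?thesis using x by simp
next
  case False
  have R: "is_subring V" using V by (simp add: valuation_ring_def)
  have "x + y \<in> V" using R x y by (simp add: is_subring_def mem_max_ideal_iff)
  moreover have "inverse (x + y) \<notin> V" if "x + y \<noteq> 0"
  proof
    assume "inverse (x + y) \<in> V"
    hence "(1 + x / y) * inverse (x + y) \<in> V" using R q by (simp add: is_subring_def)
    moreover have "(1 + x / y) * inverse (x + y) = inverse y" using False that by (simp add: field_simps)
    ultimately show False using y False by (simp add: mem_max_ideal_iff)
  qed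
  ultimately show ?thesis by (auto simp: mem_max_ideal_iff)
qed

lemma max_ideal_add_closed:
  assumes V: "valuation_ring V" and x: "x \<in> max_ideal V" and y: "y \<in> max_ideal V"
  shows "x + y \<in> max_ideal V"
proof (cases "x = 0")
  case True
  thus ?thesis using y by simp
next
  case False
  hence "x / y \<in> V \<or> y / x \<in> V"
    using V y unfolding valuation_ring_def by (metis divide_eq_0_iff inverse_divide mem_max_ideal_iff)
  thus ?thesis
    using max_ideal_add_closed_if_quotient[OF V x y] max_ideal_add_closed_if_quotient[OF V y x]
    by (auto simp: add.commute)
qed

lemma center_in_Spec:
  assumes A: "is_subring A" and V: "V \<in> Zar A"
  shows "center A V \<in> Spec A"
proof -
  have VR: "valuation_ring V" and AV: "A \<subseteq> V" using V by (auto simp: Zar_def)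
  have R: "is_subring V" using VR by (simp add: valuation_ring_def)
  have mem: "a \<in> center A V \<longleftrightarrow> a = 0 \<or> inverse a \<notin> V" if "a \<in> A" for a
    using that AV by (auto simp: center_def mem_max_ideal_iff)
  have "a * x \<in> center A V" if "a \<in> A" "x \<in> center A V" for a x
  proof -
    have "a * inverse (a * x) = inverse x" if "a * x \<noteq> 0" using that by (simp add: field_simps)
    hence "inverse (a * x) \<in> V \<Longrightarrow> a * x \<noteq> 0 \<Longrightarrow> inverse x \<in> V"
      using R AV \<open>a \<in> A\<close> unfolding is_subring_def by (metis subsetD)
    moreover have "a * x \<in> A" "x \<in> A" using A that by (auto simp: is_subring_def center_def)
    ultimately show ?thesis using mem that by auto
  qed
  moreover have "a \<in> center A V \<or> b \<in> center A V" if "a \<in> A" "b \<in> A" "a * b \<in> center A V" for a b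
  proof -
    have "a * b \<in> A" using A that by (simp add: is_subring_def)
    moreover have "inverse (a * b) \<in> V" if "inverse a \<in> V" "inverse b \<in> V"
      using R that by (simp add: is_subring_def)
    ultimately show ?thesis using mem that by auto
  qed
  moreover have "x + y \<in> center A V" if "x \<in> center A V" "y \<in> center A V" for x y
    using max_ideal_add_closed[OF VR] A that by (simp add: center_def is_subring_def)
  moreover have "0 \<in> center A V" "1 \<notin> center A V" "center A V \<subseteq> A" "1 \<in> A"
    using A AV mem by (auto simp: is_subring_def center_def)
  ultimately show ?thesis unfolding Spec_def prime_ideal_of_def by blast
qed

lemma spec_limit_pushforward_center:
  assumes C: "center A ` Y \<subseteq> C" and U: "ultrafilter_on Y U"
  shows "spec_limit A C (pushforward (center A) Y C U) = center A (zar_limit Y U)"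
proof (rule set_eqI)
  fix a
  have "{V \<in> Y. center A V \<in> {P \<in> C. a \<in> P}} = {V \<in> Y. a \<in> max_ideal V}" if "a \<in> A"
    using C that by (auto simp: center_def)
  hence "a \<in> spec_limit A C (pushforward (center A) Y C U)
      \<longleftrightarrow> a \<in> A \<and> {V \<in> Y. a \<in> max_ideal V} \<in> U"
    unfolding spec_limit_def pushforward_def by auto
  also have "\<dots> \<longleftrightarrow> a \<in> center A (zar_limit Y U)"
    using max_ideal_zar_limit[OF U, of a] unfolding center_def by blast
  finally show "a \<in> spec_limit A C (pushforward (center A) Y C U) \<longleftrightarrow> a \<in> center A (zar_limit Y U)" .
qed

theorem theorem3p9:
  fixes A :: "'k::field set"
  assumes "is_subring A"
  shows "(\<forall>C. spec_uf_closed A C \<longrightarrow> zar_uf_closed A {V \<in> Zar A. center A V \<in> C})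
       \<and> (\<forall>Y. zar_uf_closed A Y \<longrightarrow> spec_uf_closed A (center A ` Y))"
proof (intro conjI allI impI)
  fix C assume C: "spec_uf_closed A C"
  let ?Y = "{V \<in> Zar A. center A V \<in> C}"
  have "zar_limit ?Y U \<in> ?Y" if U: "ultrafilter_on ?Y U" for U
  proof -
    have sub: "center A ` ?Y \<subseteq> C" by blast
    have "spec_limit A C (pushforward (center A) ?Y C U) \<in> C"
      using C ultrafilter_on_pushforward[OF sub U] unfolding spec_uf_closed_def by blast
    hence "center A (zar_limit ?Y U) \<in> C" by (simp add: spec_limit_pushforward_center[OF sub U])
    thus ?thesis using zar_limit_in_Zar[OF _ U] by blast
  qed
  thus "zar_uf_closed A ?Y" unfolding zar_uf_closed_def by blast
next
  fix Y assume Y: "zar_uf_closed A Y"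
  have "spec_limit A (center A ` Y) U \<in> center A ` Y" if U: "ultrafilter_on (center A ` Y) U" for U
  proof -
    obtain U' where U': "ultrafilter_on Y U'" "pushforward (center A) Y (center A ` Y) U' = U"
      using ultrafilter_on_lift[OF refl U] .
    have "zar_limit Y U' \<in> Y" using Y U'(1) unfolding zar_uf_closed_def by blast
    thus ?thesis using spec_limit_pushforward_center[where A = A, OF subset_refl U'(1)] U'(2) by simp
  qed
  moreover have "center A ` Y \<subseteq> Spec A"
    using Y center_in_Spec[OF assms] unfolding zar_uf_closed_def by blast
  ultimately show "spec_uf_closed A (center A ` Y)" unfolding spec_uf_closed_def by blast
qed

end
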